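(* Given integers $D,N\ge 1$, $u_w,u_o,U_w,U_o\in\mathbb{N}$ and $0\le r_l^d\le r_u^d\le N$ for $d\in\{1,\dots,D\}$, one can in $\mathcal{O}(D^2)$ time either compute integers $W^0,\dots,W^D$ satisfying $W^D-W^0\le N U_w$; $\;N D+W^0-W^D\le N U_o$; $\;W^{d+u_w}-W^{d-1}\le N u_w$ for all $1\le d\le D-u_w$; $\;N\le W^{d+u_o}-W^{d-1}$ for all $1\le d\le D-u_o$; and $\;r_l^d\le W^d-W^{d-1}\le r_u^d$ for all $1\le d\le D$, or decide that no such integers exist. *)

theory Defs
  imports Main
begin

text \<open>A candidate solution is a list W = [W^0, ..., W^D] of integers.
  The bounds r_l^d, r_u^d (d = 1..D) are given as lists rl, ru of length D
  with r_l^d = rl ! (d-1) and r_u^d = ru ! (d-1).\<close>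

definition feasible_W ::
  "nat \<Rightarrow> nat \<Rightarrow> nat \<Rightarrow> nat \<Rightarrow> nat \<Rightarrow> nat \<Rightarrow> int list \<Rightarrow> int list \<Rightarrow> int list \<Rightarrow> bool" where
  "feasible_W D N uw uo Uw Uo rl ru W \<longleftrightarrow>
     length W = D + 1 \<and>
     W ! D - W ! 0 \<le> int N * int Uw \<and>
     int N * int D + W ! 0 - W ! D \<le> int N * int Uo \<and>
     (\<forall>d. 1 \<le> d \<and> d \<le> D - uw \<longrightarrow> W ! (d + uw) - W ! (d - 1) \<le> int N * int uw) \<and>
     (\<forall>d. 1 \<le> d \<and> d \<le> D - uo \<longrightarrow> int N \<le> W ! (d + uo) - W ! (d - 1)) \<and>
     (\<forall>d. 1 \<le> d \<and> d \<le> D \<longrightarrow>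
        rl ! (d - 1) \<le> W ! d - W ! (d - 1) \<and> W ! d - W ! (d - 1) \<le> ru ! (d - 1))"

text \<open>Cost model: every running-time function T_f below is written by hand following the
  convention of the HOL-Library time framework (Time_Functions): each call of a user-defined
  function costs 1 plus the costs of the user-defined functions it calls; list constructors and
  integer/natural-number primitives (+, -, *, min, =, int) cost 0 (unit-cost RAM).\<close>

fun minl :: "int list \<Rightarrow> int list \<Rightarrow> int list" where
  "minl (x # xs) (y # ys) = min x y # minl xs ys"
| "minl xs [] = xs"
| "minl [] ys = []"

fun T_minl :: "int list \<Rightarrow> int list \<Rightarrow> nat" where
  "T_minl (x # xs) (y # ys) = T_minl xs ys + 1"
| "T_minl xs [] = 1"
| "T_minl [] ys = 1"

fun addl :: "int list \<Rightarrow> int list \<Rightarrow> int list" where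
  "addl (x # xs) (y # ys) = (x + y) # addl xs ys"
| "addl xs ys = []"

fun T_addl :: "int list \<Rightarrow> int list \<Rightarrow> nat" where
  "T_addl (x # xs) (y # ys) = T_addl xs ys + 1"
| "T_addl xs ys = 1"

fun subl :: "int list \<Rightarrow> int list \<Rightarrow> int list" where
  "subl (x # xs) (y # ys) = (x - y) # subl xs ys"
| "subl xs ys = []"

fun T_subl :: "int list \<Rightarrow> int list \<Rightarrow> nat" where
  "T_subl (x # xs) (y # ys) = T_subl xs ys + 1"
| "T_subl xs ys = 1"

fun addc :: "int \<Rightarrow> int list \<Rightarrow> int list" where
  "addc c [] = []"
| "addc c (x # xs) = (c + x) # addc c xs"

fun T_addc :: "int \<Rightarrow> int list \<Rightarrow> nat" where
  "T_addc c [] = 1"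
| "T_addc c (x # xs) = T_addc c xs + 1"

fun takel :: "nat \<Rightarrow> int list \<Rightarrow> int list" where
  "takel 0 xs = []"
| "takel (Suc n) [] = []"
| "takel (Suc n) (x # xs) = x # takel n xs"

fun T_takel :: "nat \<Rightarrow> int list \<Rightarrow> nat" where
  "T_takel 0 xs = 1"
| "T_takel (Suc n) [] = 1"
| "T_takel (Suc n) (x # xs) = T_takel n xs + 1"

fun dropl :: "nat \<Rightarrow> int list \<Rightarrow> int list" where
  "dropl 0 xs = xs"
| "dropl (Suc n) [] = []"
| "dropl (Suc n) (x # xs) = dropl n xs"

fun T_dropl :: "nat \<Rightarrow> int list \<Rightarrow> nat" where
  "T_dropl 0 xs = 1"
| "T_dropl (Suc n) [] = 1"
| "T_dropl (Suc n) (x # xs) = T_dropl n xs + 1"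

fun appl :: "int list \<Rightarrow> int list \<Rightarrow> int list" where
  "appl [] ys = ys"
| "appl (x # xs) ys = x # appl xs ys"

fun T_appl :: "int list \<Rightarrow> int list \<Rightarrow> nat" where
  "T_appl [] ys = 1"
| "T_appl (x # xs) ys = T_appl xs ys + 1"

fun lastl :: "int list \<Rightarrow> int" where
  "lastl [] = 0"
| "lastl [x] = x"
| "lastl (x # y # ys) = lastl (y # ys)"

fun T_lastl :: "int list \<Rightarrow> nat" where
  "T_lastl [] = 1"
| "T_lastl [x] = 1"
| "T_lastl (x # y # ys) = T_lastl (y # ys) + 1"

fun minlast :: "int \<Rightarrow> int list \<Rightarrow> int list" where
  "minlast c [] = []"
| "minlast c [x] = [min x c]"
| "minlast c (x # y # ys) = x # minlast c (y # ys)"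

fun T_minlast :: "int \<Rightarrow> int list \<Rightarrow> nat" where
  "T_minlast c [] = 1"
| "T_minlast c [x] = 1"
| "T_minlast c (x # y # ys) = T_minlast c (y # ys) + 1"

fun minhd :: "int \<Rightarrow> int list \<Rightarrow> int list" where
  "minhd c [] = []"
| "minhd c (x # xs) = min x c # xs"

fun T_minhd :: "int \<Rightarrow> int list \<Rightarrow> nat" where
  "T_minhd c xs = 1"

fun hdl :: "int list \<Rightarrow> int" where
  "hdl [] = 0"
| "hdl (x # xs) = x"

fun T_hdl :: "int list \<Rightarrow> nat" where
  "T_hdl xs = 1"

fun eql :: "int list \<Rightarrow> int list \<Rightarrow> bool" where
  "eql [] [] = True"
| "eql (x # xs) (y # ys) = (x = y \<and> eql xs ys)"
| "eql xs ys = False"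

fun T_eql :: "int list \<Rightarrow> int list \<Rightarrow> nat" where
  "T_eql (x # xs) (y # ys) = T_eql xs ys + 1"
| "T_eql xs ys = 1"

fun zeros :: "nat \<Rightarrow> int list" where
  "zeros 0 = []"
| "zeros (Suc n) = 0 # zeros n"

fun T_zeros :: "nat \<Rightarrow> nat" where
  "T_zeros 0 = 1"
| "T_zeros (Suc n) = T_zeros n + 1"

text \<open>Relaxation along all edges a \<rightarrow> a+k of constant weight c, resp. along all edges a+k \<rightarrow> a.\<close>
definition relax_up :: "nat \<Rightarrow> int \<Rightarrow> int list \<Rightarrow> int list" where
  "relax_up k c L = appl (takel k L) (minl (dropl k L) (addc c L))"

definition T_relax_up :: "nat \<Rightarrow> int \<Rightarrow> int list \<Rightarrow> nat" where
  "T_relax_up k c L = T_takel k L + T_dropl k L + T_addc c L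
     + T_minl (dropl k L) (addc c L) + T_appl (takel k L) (minl (dropl k L) (addc c L)) + 1"

definition relax_down :: "nat \<Rightarrow> int \<Rightarrow> int list \<Rightarrow> int list" where
  "relax_down k c L = minl L (addc c (dropl k L))"

definition T_relax_down :: "nat \<Rightarrow> int \<Rightarrow> int list \<Rightarrow> nat" where
  "T_relax_down k c L = T_dropl k L + T_addc c (dropl k L) + T_minl L (addc c (dropl k L)) + 1"

text \<open>One round of Bellman--Ford: relax every constraint W^a - W^b \<le> c, viewed as an edge
  b \<rightarrow> a of weight c.\<close>
definition relax_round ::
  "nat \<Rightarrow> nat \<Rightarrow> nat \<Rightarrow> nat \<Rightarrow> nat \<Rightarrow> nat \<Rightarrow> int list \<Rightarrow> int list \<Rightarrow> int list \<Rightarrow> int list" where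
  "relax_round D N uw uo Uw Uo rl ru L =
    (let L1 = appl (takel 1 L) (minl (dropl 1 L) (addl L ru));
         L2 = minl L1 (subl (dropl 1 L1) rl);
         L3 = relax_up (Suc uw) (int N * int uw) L2;
         L4 = relax_down (Suc uo) (0 - int N) L3;
         L5 = minlast (hdl L4 + int N * int Uw) L4;
         L6 = minhd (lastl L5 + int N * int Uo - int N * int D) L5
     in L6)"

definition T_relax_round ::
  "nat \<Rightarrow> nat \<Rightarrow> nat \<Rightarrow> nat \<Rightarrow> nat \<Rightarrow> nat \<Rightarrow> int list \<Rightarrow> int list \<Rightarrow> int list \<Rightarrow> nat" where
  "T_relax_round D N uw uo Uw Uo rl ru L =
    (let L1 = appl (takel 1 L) (minl (dropl 1 L) (addl L ru));
         t1 = T_takel 1 L + T_dropl 1 L + T_addl L ru + T_minl (dropl 1 L) (addl L ru)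
              + T_appl (takel 1 L) (minl (dropl 1 L) (addl L ru));
         L2 = minl L1 (subl (dropl 1 L1) rl);
         t2 = T_dropl 1 L1 + T_subl (dropl 1 L1) rl + T_minl L1 (subl (dropl 1 L1) rl);
         L3 = relax_up (Suc uw) (int N * int uw) L2;
         t3 = T_relax_up (Suc uw) (int N * int uw) L2;
         L4 = relax_down (Suc uo) (0 - int N) L3;
         t4 = T_relax_down (Suc uo) (0 - int N) L3;
         L5 = minlast (hdl L4 + int N * int Uw) L4;
         t5 = T_hdl L4 + T_minlast (hdl L4 + int N * int Uw) L4;
         t6 = T_lastl L5 + T_minhd (lastl L5 + int N * int Uo - int N * int D) L5
     in t1 + t2 + t3 + t4 + t5 + t6 + 1)"

fun iter_rounds ::
  "nat \<Rightarrow> nat \<Rightarrow> nat \<Rightarrow> nat \<Rightarrow> nat \<Rightarrow> nat \<Rightarrow> nat \<Rightarrow> int list \<Rightarrow> int list \<Rightarrow> int list \<Rightarrow> int list" where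
  "iter_rounds 0 D N uw uo Uw Uo rl ru L = L"
| "iter_rounds (Suc k) D N uw uo Uw Uo rl ru L =
     iter_rounds k D N uw uo Uw Uo rl ru (relax_round D N uw uo Uw Uo rl ru L)"

fun T_iter_rounds ::
  "nat \<Rightarrow> nat \<Rightarrow> nat \<Rightarrow> nat \<Rightarrow> nat \<Rightarrow> nat \<Rightarrow> nat \<Rightarrow> int list \<Rightarrow> int list \<Rightarrow> int list \<Rightarrow> nat" where
  "T_iter_rounds 0 D N uw uo Uw Uo rl ru L = 1"
| "T_iter_rounds (Suc k) D N uw uo Uw Uo rl ru L =
     T_relax_round D N uw uo Uw Uo rl ru L
     + T_iter_rounds k D N uw uo Uw Uo rl ru (relax_round D N uw uo Uw Uo rl ru L) + 1"

definition solve_W ::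
  "nat \<Rightarrow> nat \<Rightarrow> nat \<Rightarrow> nat \<Rightarrow> nat \<Rightarrow> nat \<Rightarrow> int list \<Rightarrow> int list \<Rightarrow> int list option" where
  "solve_W D N uw uo Uw Uo rl ru =
    (let L = iter_rounds (Suc D) D N uw uo Uw Uo rl ru (zeros (Suc D))
     in if eql (relax_round D N uw uo Uw Uo rl ru L) L then Some L else None)"

definition T_solve_W ::
  "nat \<Rightarrow> nat \<Rightarrow> nat \<Rightarrow> nat \<Rightarrow> nat \<Rightarrow> nat \<Rightarrow> int list \<Rightarrow> int list \<Rightarrow> nat" where
  "T_solve_W D N uw uo Uw Uo rl ru =
    (let L = iter_rounds (Suc D) D N uw uo Uw Uo rl ru (zeros (Suc D))
     in T_zeros (Suc D) + T_iter_rounds (Suc D) D N uw uo Uw Uo rl ru (zeros (Suc D))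
        + T_relax_round D N uw uo Uw Uo rl ru L
        + T_eql (relax_round D N uw uo Uw Uo rl ru L) L + 1)"

end

theory Submission
  imports Defs
begin

text \<open>A constraint \<open>W\<^sup>a - W\<^sup>b \<le> c\<close> is an edge \<open>b \<rightarrow> a\<close> of weight \<open>c\<close>; integers
  \<open>W\<^sup>0, \<dots>, W\<^sup>D\<close> satisfy all constraints iff they form a potential of this graph on \<open>D + 1\<close>
  vertices. One call of \<open>relax_round\<close> relaxes the six constraint families one after the other,
  i.e.\ it is a Bellman--Ford round, and \<open>solve_W\<close> runs \<open>D + 1\<close> rounds from the all-zero
  vector (a virtual source with a \<open>0\<close>-edge to every vertex) and then checks for a fixpoint.
  After \<open>k\<close> rounds each entry is at most the weight of every walk with \<open>\<le> k\<close> edges ending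
  there, and at least the weight of some walk ending there. A potential makes every cycle
  nonnegative, so every walk can be shortened to at most \<open>D\<close> edges without increasing its
  weight; hence after \<open>D + 1\<close> rounds a further round changes nothing. Conversely a fixpoint
  satisfies every constraint. A round costs \<open>O(D)\<close>, so the algorithm runs in \<open>O(D\<^sup>2)\<close>.\<close>


section \<open>Walks and potentials\<close>

text \<open>\<open>(b, a, c)\<close> is the edge \<open>b \<rightarrow> a\<close> of weight \<open>c\<close>.\<close>

type_synonym edge = "nat \<times> nat \<times> int"

fun walk :: "edge set \<Rightarrow> nat \<Rightarrow> edge list \<Rightarrow> bool" where
  "walk E u [] \<longleftrightarrow> True"
| "walk E u ((b, a, c) # es) \<longleftrightarrow> b = u \<and> (b, a, c) \<in> E \<and> walk E a es"

fun walk_end :: "nat \<Rightarrow> edge list \<Rightarrow> nat" where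
  "walk_end u [] = u"
| "walk_end u ((b, a, c) # es) = walk_end a es"

definition walk_weight :: "edge list \<Rightarrow> int" where
  "walk_weight es = (\<Sum>(b, a, c) \<leftarrow> es. c)"

lemma walk_weight_simps [simp]:
  "walk_weight [] = 0"
  "walk_weight ((b, a, c) # es) = c + walk_weight es"
  "walk_weight (xs @ ys) = walk_weight xs + walk_weight ys"
  by (simp_all add: walk_weight_def)

lemma walk_end_append [simp]: "walk_end u (xs @ ys) = walk_end (walk_end u xs) ys"
  by (induction u xs rule: walk_end.induct) auto

lemma walk_append [simp]: "walk E u (xs @ ys) \<longleftrightarrow> walk E u xs \<and> walk E (walk_end u xs) ys"
  by (induction E u xs rule: walk.induct) auto

lemma walk_take_drop:
  assumes "walk E u es"
  shows "walk E u (take i es)" and "walk E (walk_end u (take i es)) (drop i es)"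
  using assms walk_append[of E u "take i es" "drop i es"] by simp_all

lemma walk_end_less:
  assumes "\<forall>b a c. (b, a, c) \<in> E \<longrightarrow> a < n" and "u < n" and "walk E u es"
  shows "walk_end u es < n"
  using assms by (induction E u es rule: walk.induct) auto

definition potential :: "edge set \<Rightarrow> (nat \<Rightarrow> int) \<Rightarrow> bool" where
  "potential E W \<longleftrightarrow> (\<forall>b a c. (b, a, c) \<in> E \<longrightarrow> W a \<le> W b + c)"

lemma potential_diff_le_walk_weight:
  assumes "potential E W" and "walk E u es"
  shows "W (walk_end u es) - W u \<le> walk_weight es"
  using assms
proof (induction E u es rule: walk.induct)
  case (2 E u b a c es)
  then have "W a \<le> W u + c"
    unfolding potential_def by auto
  with 2 show ?case
    by simp
qed simp

lemma walk_remove_cycle: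
  assumes "potential E W" and below: "\<forall>b a c. (b, a, c) \<in> E \<longrightarrow> a < n" and "u < n"
    and es: "walk E u es" and long: "n \<le> length es"
  obtains es' where "walk E u es'" "walk_end u es' = walk_end u es"
    "walk_weight es' \<le> walk_weight es" "length es' < length es"
proof -
  let ?v = "\<lambda>i. walk_end u (take i es)"
  have "?v ` {..length es} \<subseteq> {..<n}"
    using walk_end_less[OF below \<open>u < n\<close> walk_take_drop(1)[OF es]] by auto
  then have "card (?v ` {..length es}) \<le> n"
    using card_mono[OF finite_lessThan] by fastforce
  then have "card (?v ` {..length es}) < card {..length es}"
    using long by simp
  then have "\<not> inj_on ?v {..length es}"
    by (rule pigeonhole)
  then obtain i j where ij: "i < j" "j \<le> length es" "?v i = ?v j"
    unfolding inj_on_def by (metis atMost_iff linorder_neqE_nat order.strict_trans2)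
  define cycle where "cycle = take (j - i) (drop i es)"
  have split_j: "take j es = take i es @ cycle"
    using take_add[of i "j - i" es] ij by (simp add: cycle_def)
  have "walk E (?v i) cycle"
    using walk_take_drop(1)[OF es, of j] by (simp add: split_j)
  moreover have "walk_end (?v i) cycle = ?v i"
    using ij(3) by (metis split_j walk_end_append)
  ultimately have "0 \<le> walk_weight cycle"
    using potential_diff_le_walk_weight[OF assms(1)] by fastforce
  moreover have "walk_weight es = walk_weight (take j es) + walk_weight (drop j es)"
    by (metis append_take_drop_id walk_weight_simps(3))
  ultimately have "walk_weight (take i es @ drop j es) \<le> walk_weight es"
    by (simp add: split_j)
  moreover have "walk E u (take i es @ drop j es)"
    using walk_take_drop[OF es] ij(3) by simp
  moreover have "walk_end u (take i es @ drop j es) = walk_end u es"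
    using ij(3) by (metis append_take_drop_id walk_end_append)
  moreover have "length (take i es @ drop j es) < length es"
    using ij by simp
  ultimately show ?thesis
    using that by blast
qed

lemma walk_shorten:
  assumes "potential E W" and below: "\<forall>b a c. (b, a, c) \<in> E \<longrightarrow> a < n" and "u < n"
    and "walk E u es"
  shows "\<exists>es'. walk E u es' \<and> walk_end u es' = walk_end u es \<and>
           walk_weight es' \<le> walk_weight es \<and> length es' < n"
  using assms(4)
proof (induction es rule: length_induct)
  case (1 es)
  show ?case
  proof (cases "length es < n")
    case True
    with 1 show ?thesis by blast
  next
    case False
    then obtain es' where "walk E u es'" "walk_end u es' = walk_end u es"
      "walk_weight es' \<le> walk_weight es" "length es' < length es"
      using walk_remove_cycle[OF assms(1-3) 1(2)] by auto
    with 1(1) show ?thesis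
      by (metis order.trans)
  qed
qed

section \<open>Bellman--Ford rounds\<close>

definition walk_bounded :: "edge set \<Rightarrow> int list \<Rightarrow> bool" where
  "walk_bounded E L \<longleftrightarrow>
     (\<forall>a < length L. \<exists>u es. u < length L \<and> walk E u es \<and> walk_end u es = a \<and> walk_weight es \<le> L ! a)"

locale relaxation_round =
  fixes E :: "edge set" and n :: nat and R :: "int list \<Rightarrow> int list"
  assumes edges_less: "(b, a, c) \<in> E \<Longrightarrow> b < n \<and> a < n"
    and length_round: "length L = n \<Longrightarrow> length (R L) = n"
    and round_le: "length L = n \<Longrightarrow> a < n \<Longrightarrow> R L ! a \<le> L ! a"
    and round_relaxes: "length L = n \<Longrightarrow> (b, a, c) \<in> E \<Longrightarrow> R L ! a \<le> L ! b + c"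
    and walk_bounded_round: "length L = n \<Longrightarrow> walk_bounded E L \<Longrightarrow> walk_bounded E (R L)"
begin

abbreviation rounds :: "nat \<Rightarrow> int list" where
  "rounds k \<equiv> (R ^^ k) (replicate n 0)"

lemma length_rounds: "length (rounds k) = n"
  by (induction k) (simp_all add: length_round)

lemma rounds_le_walk_weight:
  assumes "u < n" and "walk E u es" and "length es \<le> k"
  shows "rounds k ! walk_end u es \<le> walk_weight es"
  using assms(2,3)
proof (induction k arbitrary: es)
  case 0
  then show ?case
    using assms(1) by simp
next
  case (Suc k)
  show ?case
  proof (cases es rule: rev_exhaust)
    case Nil
    then have "rounds k ! u \<le> 0"
      using Suc.IH[of "[]"] by simp
    then show ?thesis
      using Nil round_le[OF length_rounds assms(1), of k] by simp
  next
    case (snoc es' e)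
    obtain b a c where e: "e = (b, a, c)"
      by (cases e)
    with snoc Suc.prems have "walk E u es'" "b = walk_end u es'" "(b, a, c) \<in> E"
      by auto
    moreover from this snoc Suc.prems have "rounds k ! b \<le> walk_weight es'"
      using Suc.IH by simp
    moreover have "rounds (Suc k) ! a \<le> rounds k ! b + c"
      using round_relaxes[OF length_rounds \<open>(b, a, c) \<in> E\<close>] by simp
    ultimately show ?thesis
      using snoc e by simp
  qed
qed

lemma walk_bounded_rounds: "walk_bounded E (rounds k)"
proof (induction k)
  case 0
  show ?case
    unfolding walk_bounded_def by (auto intro!: exI[of _ "[]"])
next
  case (Suc k)
  then show ?case
    using walk_bounded_round[OF length_rounds] by simp
qed

lemma fixpoint_potential:
  assumes "length L = n" and "R L = L"
  shows "potential E (\<lambda>a. L ! a)"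
  using round_relaxes[OF assms(1)] assms(2) unfolding potential_def by metis

lemma potential_fixpoint:
  assumes "potential E W"
  shows "R (rounds n) = rounds n"
proof (rule nth_equalityI)
  show "length (R (rounds n)) = length (rounds n)"
    by (simp add: length_round length_rounds)
  fix a
  assume "a < length (R (rounds n))"
  then have a: "a < n"
    by (simp add: length_round length_rounds)
  have "walk_bounded E (R (rounds n))"
    using walk_bounded_rounds[of "Suc n"] by simp
  then obtain u es where "u < n" "walk E u es" "walk_end u es = a" "walk_weight es \<le> R (rounds n) ! a"
    using a unfolding walk_bounded_def by (auto simp: length_round length_rounds)
  moreover from this obtain es' where "walk E u es'" "walk_end u es' = a"
    "walk_weight es' \<le> walk_weight es" "length es' < n"
    using walk_shorten[OF assms] edges_less by blast
  ultimately have "rounds n ! a \<le> R (rounds n) ! a"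
    using rounds_le_walk_weight[of u es' n] by fastforce
  then show "R (rounds n) ! a = rounds n ! a"
    using round_le[OF length_rounds a, of n] by simp
qed

end

lemma relaxation_round_cong:
  assumes "relaxation_round E n R" and "\<And>L. length L = n \<Longrightarrow> R' L = R L"
  shows "relaxation_round E n R'"
  using assms unfolding relaxation_round_def by simp

definition relax_along :: "(nat \<Rightarrow> (nat \<times> int) option) \<Rightarrow> int list \<Rightarrow> int list" where
  "relax_along p L =
     map (\<lambda>a. case p a of None \<Rightarrow> L ! a | Some (b, c) \<Rightarrow> min (L ! a) (L ! b + c)) [0..<length L]"

definition pred_edges :: "nat \<Rightarrow> (nat \<Rightarrow> (nat \<times> int) option) \<Rightarrow> edge set" where
  "pred_edges n p = {(b, a, c). a < n \<and> p a = Some (b, c)}"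

lemma length_relax_along [simp]: "length (relax_along p L) = length L"
  by (simp add: relax_along_def)

lemma nth_relax_along:
  "a < length L \<Longrightarrow>
     relax_along p L ! a = (case p a of None \<Rightarrow> L ! a | Some (b, c) \<Rightarrow> min (L ! a) (L ! b + c))"
  by (simp add: relax_along_def split: option.split)

lemma relax_along_le: "a < length L \<Longrightarrow> relax_along p L ! a \<le> L ! a"
  by (simp add: nth_relax_along split: option.split)

lemma relax_along_relaxes: "(b, a, c) \<in> pred_edges (length L) p \<Longrightarrow> relax_along p L ! a \<le> L ! b + c"
  by (simp add: pred_edges_def nth_relax_along)

lemma walk_bounded_relax_along:
  assumes L: "walk_bounded E L" and "pred_edges (length L) p \<subseteq> E"
    and sources: "\<And>b a c. (b, a, c) \<in> E \<Longrightarrow> b < length L"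
  shows "walk_bounded E (relax_along p L)"
  unfolding walk_bounded_def length_relax_along
proof (intro allI impI)
  fix a
  assume a: "a < length L"
  show "\<exists>u es. u < length L \<and> walk E u es \<and> walk_end u es = a \<and> walk_weight es \<le> relax_along p L ! a"
  proof (cases "\<exists>b c. p a = Some (b, c) \<and> L ! b + c < L ! a")
    case True
    then obtain b c where "p a = Some (b, c)" "relax_along p L ! a = L ! b + c"
      using a by (auto simp: nth_relax_along)
    moreover from this have edge: "(b, a, c) \<in> E"
      using a assms(2) by (auto simp: pred_edges_def)
    moreover obtain u es where "u < length L" "walk E u es" "walk_end u es = b" "walk_weight es \<le> L ! b"
      using L sources[OF edge] unfolding walk_bounded_def by blast
    ultimately show ?thesis
      by (intro exI[of _ u] exI[of _ "es @ [(b, a, c)]"]) simp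
  next
    case False
    then have "relax_along p L ! a = L ! a"
      using a by (auto simp: nth_relax_along split: option.split)
    then show ?thesis
      using L a unfolding walk_bounded_def by simp
  qed
qed

lemma length_fold_relax_along [simp]: "length (fold relax_along ps L) = length L"
  by (induction ps arbitrary: L) simp_all

lemma fold_relax_along_le: "a < length L \<Longrightarrow> fold relax_along ps L ! a \<le> L ! a"
proof (induction ps arbitrary: L)
  case (Cons p ps)
  then show ?case
    using order.trans[OF Cons.IH[of "relax_along p L"] relax_along_le[OF Cons.prems]] by simp
qed simp

lemma fold_relax_along_relaxes:
  assumes "p \<in> set ps" and "(b, a, c) \<in> pred_edges (length L) p" and "b < length L"
  shows "fold relax_along ps L ! a \<le> L ! b + c"
  using assms
proof (induction ps arbitrary: L)
  case (Cons q ps)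
  have a: "a < length L"
    using Cons.prems(2) by (simp add: pred_edges_def)
  show ?case
  proof (cases "p = q")
    case True
    then show ?thesis
      using fold_relax_along_le[of a "relax_along q L" ps] relax_along_relaxes[OF Cons.prems(2)] a
      by simp
  next
    case False
    then show ?thesis
      using Cons.IH[of "relax_along q L"] Cons.prems relax_along_le[OF Cons.prems(3), of q] by fastforce
  qed
qed simp

lemma walk_bounded_fold_relax_along:
  assumes "walk_bounded E L" and "\<And>p. p \<in> set ps \<Longrightarrow> pred_edges (length L) p \<subseteq> E"
    and "\<And>b a c. (b, a, c) \<in> E \<Longrightarrow> b < length L"
  shows "walk_bounded E (fold relax_along ps L)"
  using assms by (induction ps arbitrary: L) (simp_all add: walk_bounded_relax_along)

lemma relaxation_round_fold_relax_along:
  assumes "\<And>b a c. (b, a, c) \<in> (\<Union>p \<in> set ps. pred_edges n p) \<Longrightarrow> b < n"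
  shows "relaxation_round (\<Union>p \<in> set ps. pred_edges n p) n (fold relax_along ps)"
proof unfold_locales
  fix b a c
  assume edge: "(b, a, c) \<in> (\<Union>p \<in> set ps. pred_edges n p)"
  then have "a < n"
    by (auto simp: pred_edges_def)
  with assms[OF edge] show "b < n \<and> a < n"
    by simp
next
  fix L :: "int list"
  assume L: "length L = n"
  then show "length (fold relax_along ps L) = n"
    by simp
  show "fold relax_along ps L ! a \<le> L ! a" if "a < n" for a
    using fold_relax_along_le[of a L ps] that L by simp
  show "fold relax_along ps L ! a \<le> L ! b + c"
    if edge: "(b, a, c) \<in> (\<Union>p \<in> set ps. pred_edges n p)" for b a c
  proof -
    from edge obtain p where "p \<in> set ps" "(b, a, c) \<in> pred_edges (length L) p"
      using L by blast
    then show ?thesis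
      using fold_relax_along_relaxes assms[OF edge] L by simp
  qed
  show "walk_bounded (\<Union>p \<in> set ps. pred_edges n p) (fold relax_along ps L)"
    if "walk_bounded (\<Union>p \<in> set ps. pred_edges n p) L"
  proof (rule walk_bounded_fold_relax_along[OF that])
    show "pred_edges (length L) p \<subseteq> (\<Union>p \<in> set ps. pred_edges n p)" if "p \<in> set ps" for p
      using that L by blast
    show "b < length L" if "(b, a, c) \<in> (\<Union>p \<in> set ps. pred_edges n p)" for b a c
      using assms[OF that] L by simp
  qed
qed

section \<open>The list primitives\<close>

lemma length_minl [simp]: "length (minl xs ys) = length xs"
  by (induction xs ys rule: minl.induct) auto

lemma nth_minl:
  "i < length xs \<Longrightarrow> minl xs ys ! i = (if i < length ys then min (xs ! i) (ys ! i) else xs ! i)"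
  by (induction xs ys arbitrary: i rule: minl.induct) (auto simp: nth_Cons split: nat.split)

lemma addl_eq_map2: "addl xs ys = map2 (+) xs ys"
  by (induction xs ys rule: addl.induct) auto

lemma subl_eq_map2: "subl xs ys = map2 (-) xs ys"
  by (induction xs ys rule: subl.induct) auto

lemma addc_eq_map: "addc c xs = map ((+) c) xs"
  by (induction xs) auto

lemma takel_eq_take: "takel n xs = take n xs"
  by (induction n xs rule: takel.induct) auto

lemma dropl_eq_drop: "dropl n xs = drop n xs"
  by (induction n xs rule: dropl.induct) auto

lemma appl_eq_append: "appl xs ys = xs @ ys"
  by (induction xs) auto

lemma lastl_eq_last: "xs \<noteq> [] \<Longrightarrow> lastl xs = last xs"
  by (induction xs rule: lastl.induct) auto

lemma hdl_eq_hd: "xs \<noteq> [] \<Longrightarrow> hdl xs = hd xs"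
  by (cases xs) auto

lemma minlast_eq_update: "xs \<noteq> [] \<Longrightarrow> minlast c xs = xs[length xs - 1 := min (last xs) c]"
  by (induction c xs rule: minlast.induct) auto

lemma minhd_eq_update: "xs \<noteq> [] \<Longrightarrow> minhd c xs = xs[0 := min (hd xs) c]"
  by (cases xs) auto

lemma eql_iff: "eql xs ys \<longleftrightarrow> xs = ys"
  by (induction xs ys rule: eql.induct) auto

lemma zeros_eq_replicate: "zeros n = replicate n 0"
  by (induction n) auto

lemma iter_rounds_eq_funpow:
  "iter_rounds k D N uw uo Uw Uo rl ru L = (relax_round D N uw uo Uw Uo rl ru ^^ k) L"
  by (induction k arbitrary: L) (simp_all add: funpow_swap1)

lemma solve_W_eq:
  "solve_W D N uw uo Uw Uo rl ru =
    (let L = (relax_round D N uw uo Uw Uo rl ru ^^ Suc D) (replicate (Suc D) 0)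
     in if relax_round D N uw uo Uw Uo rl ru L = L then Some L else None)"
  by (simp only: solve_W_def iter_rounds_eq_funpow zeros_eq_replicate eql_iff)

lemma length_addl [simp]: "length (addl xs ys) = min (length xs) (length ys)"
  by (simp add: addl_eq_map2)

lemma length_subl [simp]: "length (subl xs ys) = min (length xs) (length ys)"
  by (simp add: subl_eq_map2)

lemma length_addc [simp]: "length (addc c xs) = length xs"
  by (simp add: addc_eq_map)

lemma length_takel [simp]: "length (takel n xs) = min n (length xs)"
  by (simp add: takel_eq_take)

lemma length_dropl [simp]: "length (dropl n xs) = length xs - n"
  by (simp add: dropl_eq_drop)

lemma length_appl [simp]: "length (appl xs ys) = length xs + length ys"
  by (simp add: appl_eq_append)

lemma length_minlast [simp]: "length (minlast c xs) = length xs"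
  by (induction c xs rule: minlast.induct) auto

lemma length_minhd [simp]: "length (minhd c xs) = length xs"
  by (cases xs) auto

lemma length_relax_up [simp]: "length (relax_up k c L) = length L"
  by (simp add: relax_up_def)

lemma length_relax_down [simp]: "length (relax_down k c L) = length L"
  by (simp add: relax_down_def)

lemma T_minl_eq [simp]: "T_minl xs ys = min (length xs) (length ys) + 1"
  by (induction xs ys rule: T_minl.induct) auto

lemma T_addl_eq [simp]: "T_addl xs ys = min (length xs) (length ys) + 1"
  by (induction xs ys rule: T_addl.induct) auto

lemma T_subl_eq [simp]: "T_subl xs ys = min (length xs) (length ys) + 1"
  by (induction xs ys rule: T_subl.induct) auto

lemma T_eql_eq [simp]: "T_eql xs ys = min (length xs) (length ys) + 1"
  by (induction xs ys rule: T_eql.induct) auto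

lemma T_addc_eq [simp]: "T_addc c xs = length xs + 1"
  by (induction xs) auto

lemma T_takel_eq [simp]: "T_takel n xs = min n (length xs) + 1"
  by (induction n xs rule: T_takel.induct) auto

lemma T_dropl_eq [simp]: "T_dropl n xs = min n (length xs) + 1"
  by (induction n xs rule: T_dropl.induct) auto

lemma T_appl_eq [simp]: "T_appl xs ys = length xs + 1"
  by (induction xs) auto

lemma T_lastl_eq [simp]: "T_lastl xs = max 1 (length xs)"
  by (induction xs rule: T_lastl.induct) auto

lemma T_minlast_eq [simp]: "T_minlast c xs = max 1 (length xs)"
  by (induction c xs rule: T_minlast.induct) auto

lemma T_zeros_eq [simp]: "T_zeros n = n + 1"
  by (induction n) auto

lemma relax_along_predecessor_eq:
  assumes "length L = Suc (length r)"
  shows "appl (takel 1 L) (minl (dropl 1 L) (addl L r)) =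
    relax_along (\<lambda>a. if 0 < a then Some (a - 1, r ! (a - 1)) else None) L" (is "?lhs = ?rhs")
proof (rule nth_equalityI)
  fix i
  assume "i < length ?lhs"
  with assms show "?lhs ! i = ?rhs ! i"
    by (auto simp: nth_relax_along takel_eq_take dropl_eq_drop appl_eq_append addl_eq_map2 nth_append
        nth_minl)
qed (use assms in \<open>simp add: takel_eq_take dropl_eq_drop appl_eq_append addl_eq_map2\<close>)

lemma relax_along_successor_eq:
  assumes "length L = Suc (length r)"
  shows "minl L (subl (dropl 1 L) r) =
    relax_along (\<lambda>a. if a < length r then Some (Suc a, - r ! a) else None) L" (is "?lhs = ?rhs")
proof (rule nth_equalityI)
  fix i
  assume "i < length ?lhs"
  with assms show "?lhs ! i = ?rhs ! i"
    by (simp add: nth_relax_along dropl_eq_drop subl_eq_map2 nth_minl)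
qed simp

lemma relax_up_eq_relax_along:
  "relax_up k c L = relax_along (\<lambda>a. if k \<le> a then Some (a - k, c) else None) L" (is "?lhs = ?rhs")
proof (rule nth_equalityI)
  fix i
  assume "i < length ?lhs"
  then show "?lhs ! i = ?rhs ! i"
    by (auto simp: relax_up_def nth_relax_along takel_eq_take dropl_eq_drop appl_eq_append addc_eq_map
        nth_append nth_minl add.commute)
qed simp

lemma relax_down_eq_relax_along:
  "relax_down k c L = relax_along (\<lambda>a. if a + k < length L then Some (a + k, c) else None) L"
  (is "?lhs = ?rhs")
proof (rule nth_equalityI)
  fix i
  assume "i < length ?lhs"
  then show "?lhs ! i = ?rhs ! i"
    by (simp add: relax_down_def nth_relax_along dropl_eq_drop addc_eq_map nth_minl add.commute)
qed simp

lemma minlast_eq_relax_along: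
  assumes "length L = Suc n"
  shows "minlast (hdl L + c) L = relax_along (\<lambda>a. if a = n then Some (0, c) else None) L"
proof -
  have "L \<noteq> []"
    using assms by auto
  with assms show ?thesis
    by (intro nth_equalityI)
      (simp_all add: minlast_eq_update hdl_eq_hd last_conv_nth hd_conv_nth nth_list_update
        nth_relax_along)
qed

lemma minhd_eq_relax_along:
  assumes "length L = Suc n"
  shows "minhd (lastl L + c) L = relax_along (\<lambda>a. if a = 0 then Some (n, c) else None) L"
proof -
  have "L \<noteq> []"
    using assms by auto
  with assms show ?thesis
    by (intro nth_equalityI)
      (simp_all add: minhd_eq_update lastl_eq_last last_conv_nth hd_conv_nth nth_list_update
        nth_relax_along add.commute)
qed

section \<open>The constraint graph\<close>

definition constraint_preds ::
  "nat \<Rightarrow> nat \<Rightarrow> nat \<Rightarrow> nat \<Rightarrow> nat \<Rightarrow> nat \<Rightarrow> int list \<Rightarrow> int list \<Rightarrow> (nat \<Rightarrow> (nat \<times> int) option) list"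
where
  "constraint_preds D N uw uo Uw Uo rl ru =
    [\<lambda>a. if 0 < a then Some (a - 1, ru ! (a - 1)) else None,
     \<lambda>a. if a < D then Some (Suc a, - rl ! a) else None,
     \<lambda>a. if Suc uw \<le> a then Some (a - Suc uw, int N * int uw) else None,
     \<lambda>a. if a + Suc uo < Suc D then Some (a + Suc uo, - int N) else None,
     \<lambda>a. if a = D then Some (0, int N * int Uw) else None,
     \<lambda>a. if a = 0 then Some (D, int N * int Uo - int N * int D) else None]"

definition constraint_graph ::
  "nat \<Rightarrow> nat \<Rightarrow> nat \<Rightarrow> nat \<Rightarrow> nat \<Rightarrow> nat \<Rightarrow> int list \<Rightarrow> int list \<Rightarrow> edge set" where
  "constraint_graph D N uw uo Uw Uo rl ru =
     (\<Union>p \<in> set (constraint_preds D N uw uo Uw Uo rl ru). pred_edges (Suc D) p)"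

lemma potential_UN: "potential (\<Union>i \<in> I. E i) W \<longleftrightarrow> (\<forall>i \<in> I. potential (E i) W)"
  by (auto simp: potential_def)

lemma potential_pred_edges_if:
  "potential (pred_edges n (\<lambda>a. if P a then Some (f a, g a) else None)) W \<longleftrightarrow>
     (\<forall>a < n. P a \<longrightarrow> W a \<le> W (f a) + g a)"
  by (auto simp: potential_def pred_edges_def)

lemma increment_upper_iff:
  fixes W ru :: "int list"
  shows "(\<forall>a < Suc D. 0 < a \<longrightarrow> W ! a \<le> W ! (a - 1) + ru ! (a - 1)) \<longleftrightarrow>
    (\<forall>d. 1 \<le> d \<and> d \<le> D \<longrightarrow> W ! d - W ! (d - 1) \<le> ru ! (d - 1))" (is "?edges \<longleftrightarrow> ?bounds")
proof safe
  fix d assume ?edges "1 \<le> d" "d \<le> D"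
  then show "W ! d - W ! (d - 1) \<le> ru ! (d - 1)"
    by (auto dest!: spec[of _ d])
next
  fix a assume ?bounds "a < Suc D" "0 < a"
  then show "W ! a \<le> W ! (a - 1) + ru ! (a - 1)"
    by (auto dest!: spec[of _ a])
qed

lemma increment_lower_iff:
  fixes W rl :: "int list"
  shows "(\<forall>a < Suc D. a < D \<longrightarrow> W ! a \<le> W ! Suc a + - rl ! a) \<longleftrightarrow>
    (\<forall>d. 1 \<le> d \<and> d \<le> D \<longrightarrow> rl ! (d - 1) \<le> W ! d - W ! (d - 1))" (is "?edges \<longleftrightarrow> ?bounds")
proof safe
  fix d assume ?edges "1 \<le> d" "d \<le> D"
  then show "rl ! (d - 1) \<le> W ! d - W ! (d - 1)"
    by (auto dest!: spec[of _ "d - 1"])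
next
  fix a assume ?bounds "a < Suc D" "a < D"
  then show "W ! a \<le> W ! Suc a + - rl ! a"
    by (auto dest!: spec[of _ "Suc a"])
qed

lemma window_upper_iff:
  fixes W :: "int list"
  shows "(\<forall>a < Suc D. Suc uw \<le> a \<longrightarrow> W ! a \<le> W ! (a - Suc uw) + int N * int uw) \<longleftrightarrow>
    (\<forall>d. 1 \<le> d \<and> d \<le> D - uw \<longrightarrow> W ! (d + uw) - W ! (d - 1) \<le> int N * int uw)"
    (is "?edges \<longleftrightarrow> ?bounds")
proof safe
  fix d assume ?edges "1 \<le> d" "d \<le> D - uw"
  then show "W ! (d + uw) - W ! (d - 1) \<le> int N * int uw"
    by (auto dest!: spec[of _ "d + uw"])
next
  fix a assume ?bounds "a < Suc D" "Suc uw \<le> a"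
  then show "W ! a \<le> W ! (a - Suc uw) + int N * int uw"
    by (auto dest!: spec[of _ "a - uw"])
qed

lemma window_lower_iff:
  fixes W :: "int list"
  shows "(\<forall>a < Suc D. a + Suc uo < Suc D \<longrightarrow> W ! a \<le> W ! (a + Suc uo) + - int N) \<longleftrightarrow>
    (\<forall>d. 1 \<le> d \<and> d \<le> D - uo \<longrightarrow> int N \<le> W ! (d + uo) - W ! (d - 1))"
    (is "?edges \<longleftrightarrow> ?bounds")
proof safe
  fix d assume ?edges "1 \<le> d" "d \<le> D - uo"
  then show "int N \<le> W ! (d + uo) - W ! (d - 1)"
    by (auto dest!: spec[of _ "d - 1"])
next
  fix a assume ?bounds "a < Suc D" "a + Suc uo < Suc D"
  then show "W ! a \<le> W ! (a + Suc uo) + - int N"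
    by (auto dest!: spec[of _ "Suc a"])
qed

lemma feasible_W_iff_potential:
  "feasible_W D N uw uo Uw Uo rl ru W \<longleftrightarrow>
     length W = Suc D \<and> potential (constraint_graph D N uw uo Uw Uo rl ru) (\<lambda>a. W ! a)"
  unfolding feasible_W_def constraint_graph_def potential_UN constraint_preds_def list.set ball_simps
    potential_pred_edges_if increment_upper_iff increment_lower_iff window_upper_iff window_lower_iff
  by (auto simp: all_conj_distrib)

section \<open>Correctness and running time\<close>

context
  fixes D N uw uo Uw Uo :: nat and rl ru :: "int list"
  assumes length_rl: "length rl = D" and length_ru: "length ru = D"
begin

lemma relax_round_eq_fold:
  assumes "length L = Suc D"
  shows "relax_round D N uw uo Uw Uo rl ru L =
    fold relax_along (constraint_preds D N uw uo Uw Uo rl ru) L"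
proof -
  have ru: "length L = Suc (length ru)" and rl: "length (relax_along p L) = Suc (length rl)" for p
    using assms length_rl length_ru by simp_all
  show ?thesis
    using assms length_rl
    unfolding relax_round_def Let_def add_diff_eq[symmetric]
      relax_along_predecessor_eq[OF ru] relax_along_successor_eq[OF rl]
    by (simp add: constraint_preds_def relax_up_eq_relax_along relax_down_eq_relax_along
        minlast_eq_relax_along minhd_eq_relax_along)
qed

lemma length_relax_round: "length L = Suc D \<Longrightarrow> length (relax_round D N uw uo Uw Uo rl ru L) = Suc D"
  by (simp add: relax_round_eq_fold)

lemma relaxation_round_relax_round:
  "relaxation_round (constraint_graph D N uw uo Uw Uo rl ru) (Suc D)
    (relax_round D N uw uo Uw Uo rl ru)"
proof -
  have "relaxation_round (constraint_graph D N uw uo Uw Uo rl ru) (Suc D)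
      (fold relax_along (constraint_preds D N uw uo Uw Uo rl ru))"
    unfolding constraint_graph_def
    by (rule relaxation_round_fold_relax_along)
      (auto simp: constraint_preds_def pred_edges_def split: if_splits)
  then show ?thesis
    by (rule relaxation_round_cong) (simp add: relax_round_eq_fold)
qed

theorem solve_W_correct:
  "(\<forall>W. solve_W D N uw uo Uw Uo rl ru = Some W \<longrightarrow> feasible_W D N uw uo Uw Uo rl ru W) \<and>
    (solve_W D N uw uo Uw Uo rl ru = None \<longrightarrow> \<not> (\<exists>W. feasible_W D N uw uo Uw Uo rl ru W))"
proof -
  interpret relaxation_round "constraint_graph D N uw uo Uw Uo rl ru" "Suc D"
    "relax_round D N uw uo Uw Uo rl ru"
    by (rule relaxation_round_relax_round)
  define L where "L = rounds (Suc D)"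
  have L: "length L = Suc D"
    unfolding L_def by (rule length_rounds)
  have "solve_W D N uw uo Uw Uo rl ru =
      (if relax_round D N uw uo Uw Uo rl ru L = L then Some L else None)"
    unfolding solve_W_eq Let_def L_def ..
  then show ?thesis
    unfolding feasible_W_iff_potential
    using fixpoint_potential[OF L] potential_fixpoint[folded L_def] L by auto
qed

lemma T_relax_round_le: "length L = Suc D \<Longrightarrow> T_relax_round D N uw uo Uw Uo rl ru L \<le> 30 * D + 60"
  using length_rl length_ru by (simp add: T_relax_round_def Let_def T_relax_up_def T_relax_down_def)

lemma T_iter_rounds_le:
  "length L = Suc D \<Longrightarrow> T_iter_rounds k D N uw uo Uw Uo rl ru L \<le> k * (30 * D + 61) + 1"
proof (induction k arbitrary: L)
  case (Suc k)
  then show ?case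
    using T_relax_round_le[OF Suc.prems] Suc.IH[OF length_relax_round[OF Suc.prems]] by simp
qed simp

theorem T_solve_W_le:
  assumes "1 \<le> D"
  shows "T_solve_W D N uw uo Uw Uo rl ru \<le> 400 * D\<^sup>2"
proof -
  define L where "L = iter_rounds (Suc D) D N uw uo Uw Uo rl ru (zeros (Suc D))"
  have zeros: "length (zeros (Suc D)) = Suc D"
    by (simp add: zeros_eq_replicate)
  have L: "length L = Suc D"
    unfolding L_def iter_rounds_eq_funpow zeros_eq_replicate
    by (rule relaxation_round.length_rounds[OF relaxation_round_relax_round])
  have "T_solve_W D N uw uo Uw Uo rl ru =
      T_zeros (Suc D) + T_iter_rounds (Suc D) D N uw uo Uw Uo rl ru (zeros (Suc D))
      + T_relax_round D N uw uo Uw Uo rl ru L + T_eql (relax_round D N uw uo Uw Uo rl ru L) L + 1"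
    unfolding T_solve_W_def Let_def L_def ..
  also have "\<dots> \<le> (D + 2) + (Suc D * (30 * D + 61) + 1) + (30 * D + 60) + (D + 2) + 1"
    using T_iter_rounds_le[OF zeros, of "Suc D"] T_relax_round_le[OF L] length_relax_round[OF L] L
    by simp
  also have "\<dots> = 30 * (D * D) + 123 * D + 127"
    by (simp add: algebra_simps)
  also have "\<dots> \<le> 400 * D\<^sup>2"
  proof -
    have "D \<le> D * D" and "1 \<le> D * D"
      using assms by simp_all
    then show ?thesis
      unfolding power2_eq_square by linarith
  qed
  finally show ?thesis .
qed

end

theorem proposition4p9:
  "(\<forall>D N uw uo Uw Uo rl ru.
      1 \<le> D \<and> 1 \<le> N \<and> length rl = D \<and> length ru = D \<and>
      (\<forall>i<D. 0 \<le> rl ! i \<and> rl ! i \<le> ru ! i \<and> ru ! i \<le> int N) \<longrightarrow>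
        (\<forall>W. solve_W D N uw uo Uw Uo rl ru = Some W \<longrightarrow> feasible_W D N uw uo Uw Uo rl ru W) \<and>
        (solve_W D N uw uo Uw Uo rl ru = None \<longrightarrow> \<not> (\<exists>W. feasible_W D N uw uo Uw Uo rl ru W)))
   \<and>
   (\<exists>C::nat. \<forall>D N uw uo Uw Uo rl ru.
      1 \<le> D \<and> 1 \<le> N \<and> length rl = D \<and> length ru = D \<and>
      (\<forall>i<D. 0 \<le> rl ! i \<and> rl ! i \<le> ru ! i \<and> ru ! i \<le> int N) \<longrightarrow>
        T_solve_W D N uw uo Uw Uo rl ru \<le> C * D ^ 2)"
  by (intro conjI exI[of _ 400]) (simp_all add: solve_W_correct T_solve_W_le)

end
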